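(* Let $\mathbf{C}=\{\mathfrak{F}_k\mid k\ge1\}$ and let $\vDash_{\mathbf{ML}}$ denote $\vDash_{\mathbf{C}}$. Let $p_0$ be a propositional variable not occurring in any $\boldsymbol{bd}_i$. Then $\{\boldsymbol{bd}_i\to p_0\mid i\ge1\}\vDash_{\mathbf{ML}}p_0$, but $\Gamma'\nvDash_{\mathbf{ML}}p_0$ for every finite $\Gamma'\subseteq\{\boldsymbol{bd}_i\to p_0\mid i\ge1\}$. Hence $\vDash_{\mathbf{ML}}$ is not compact.
   Context: Formulas are built from a countably infinite set of propositional variables and $\bot$ using $\land,\lor,\to$; intuitionistic Kripke semantics with valuations assigning upward-closed sets. For $k\ge1$, $\mathfrak{F}_k=\langle\wp^*(k),\supseteq\rangle$, where $k=\{0,\dots,k-1\}$ and $\wp^*(k)$ is the set of non-empty subsets of $k$. For a poset $\mathfrak{P}$, $\Gamma\vDash_{\mathfrak{P}}\varphi$ means: for every valuation $V$ and every point $w$, if all formulas of $\Gamma$ are forced at $w$ then $\varphi$ is forced at $w$; for a class $\mathbf{C}$, $\Gamma\vDash_{\mathbf{C}}\varphi$ means $\Gamma\vDash_{\mathfrak{P}}\varphi$ for all $\mathfrak{P}\in\mathbf{C}$. For $i\ge1$, $\boldsymbol{bd}_i$ is the formula $p_i\lor(p_i\to(p_{i-1}\lor(p_{i-1}\to(\cdots(p_1\lor(p_1\to\bot))\cdots))))$ in the variables $p_1,\dots,p_i$. *)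

theory Defs
  imports Main
begin

datatype form = Var nat | Bot | And form form | Or form form | Imp form form

fun forces :: "'a set \<Rightarrow> ('a \<Rightarrow> 'a \<Rightarrow> bool) \<Rightarrow> (nat \<Rightarrow> 'a set) \<Rightarrow> 'a \<Rightarrow> form \<Rightarrow> bool" where
  "forces W le V w (Var n) = (w \<in> V n)"
| "forces W le V w Bot = False"
| "forces W le V w (And a b) = (forces W le V w a \<and> forces W le V w b)"
| "forces W le V w (Or a b) = (forces W le V w a \<or> forces W le V w b)"
| "forces W le V w (Imp a b) = (\<forall>v\<in>W. le w v \<longrightarrow> forces W le V v a \<longrightarrow> forces W le V v b)"

definition valuation :: "'a set \<Rightarrow> ('a \<Rightarrow> 'a \<Rightarrow> bool) \<Rightarrow> (nat \<Rightarrow> 'a set) \<Rightarrow> bool" where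
  "valuation W le V \<longleftrightarrow> (\<forall>n. V n \<subseteq> W \<and> (\<forall>w\<in>V n. \<forall>v\<in>W. le w v \<longrightarrow> v \<in> V n))"

definition poset_conseq :: "'a set \<Rightarrow> ('a \<Rightarrow> 'a \<Rightarrow> bool) \<Rightarrow> form set \<Rightarrow> form \<Rightarrow> bool" where
  "poset_conseq W le \<Gamma> \<phi> \<longleftrightarrow>
     (\<forall>V. valuation W le V \<longrightarrow> (\<forall>w\<in>W. (\<forall>\<gamma>\<in>\<Gamma>. forces W le V w \<gamma>) \<longrightarrow> forces W le V w \<phi>))"

text \<open>F_k = (nonempty subsets of {0..k-1}, \<supseteq>)\<close>
definition Fk :: "nat \<Rightarrow> nat set set" where
  "Fk k = {s. s \<noteq> {} \<and> s \<subseteq> {..<k}}"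

definition medvedev_conseq :: "form set \<Rightarrow> form \<Rightarrow> bool" where
  "medvedev_conseq \<Gamma> \<phi> \<longleftrightarrow> (\<forall>k\<ge>1. poset_conseq (Fk k) (\<lambda>w v. v \<subseteq> w) \<Gamma> \<phi>)"

text \<open>bd_i with p_j = Var j; bd 0 = Bot is an auxiliary base case, so
  bd 1 = p_1 \<or> (p_1 \<rightarrow> \<bottom>) and bd (i+1) = p_(i+1) \<or> (p_(i+1) \<rightarrow> bd i).\<close>
fun bd :: "nat \<Rightarrow> form" where
  "bd 0 = Bot"
| "bd (Suc i) = Or (Var (Suc i)) (Imp (Var (Suc i)) (bd i))"

definition compact_conseq :: "(form set \<Rightarrow> form \<Rightarrow> bool) \<Rightarrow> bool" where
  "compact_conseq C \<longleftrightarrow> (\<forall>\<Gamma> \<phi>. C \<Gamma> \<phi> \<longrightarrow> (\<exists>\<Gamma>'. finite \<Gamma>' \<and> \<Gamma>' \<subseteq> \<Gamma> \<and> C \<Gamma>' \<phi>))"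

end

theory Submission
  imports Defs
begin

text \<open>On \<open>\<FF>\<^sub>k\<close> a point \<open>w\<close> sees only chains of length at most \<open>card w \<le> k\<close>, so \<open>bd\<^sub>k\<close>
  holds everywhere in \<open>\<FF>\<^sub>k\<close> and all premises together force \<open>p\<^sub>0\<close>. Conversely, finitely
  many premises mention only \<open>bd\<^sub>i\<close> with \<open>i \<le> n\<close>; on \<open>\<FF>\<^sub>n\<^sub>+\<^sub>1\<close>, valuating \<open>p\<^sub>j\<close> by the
  sets of size at most \<open>j\<close> makes \<open>bd\<^sub>i\<close> true exactly at sets of size at most \<open>i\<close>, so taking
  \<open>p\<^sub>0\<close> true at the sets of size at most \<open>n\<close> validates those premises at the top point
  \<open>{0,\<dots>,n}\<close>, where \<open>p\<^sub>0\<close> fails.\<close>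

lemma card_le_of_Fk: "w \<in> Fk k \<Longrightarrow> card w \<le> k"
  unfolding Fk_def by (metis card_lessThan card_mono finite_lessThan mem_Collect_eq)

lemma Fk_finite_nonempty: "\<forall>w\<in>Fk k. finite w \<and> w \<noteq> {}"
  unfolding Fk_def using finite_subset by blast

lemma forces_bd_if_card_le:
  assumes W: "\<forall>u\<in>W. finite u \<and> u \<noteq> {}"
    and "w \<in> W" "card w \<le> i"
  shows "forces W (\<lambda>w v. v \<subseteq> w) V w (bd i)"
  using assms(2,3)
proof (induction i arbitrary: w)
  case 0
  then show ?case using W by auto
next
  case (Suc i)
  have "forces W (\<lambda>w v. v \<subseteq> w) V v (bd i)"
    if "v \<in> W" "v \<subset> w" for v
    using Suc.IH[OF \<open>v \<in> W\<close>] psubset_card_mono[OF _ \<open>v \<subset> w\<close>] W Suc.prems by fastforce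
  then show ?case by (auto simp: psubset_eq)
qed

lemma not_forces_bd_if_card_gt:
  assumes V: "\<And>j. j \<ge> 1 \<Longrightarrow> V j = {v \<in> Fk k. card v \<le> j}"
    and "w \<in> Fk k" "i < card w"
  shows "\<not> forces (Fk k) (\<lambda>w v. v \<subseteq> w) V w (bd i)"
  using assms(2,3)
proof (induction i arbitrary: w)
  case 0
  then show ?case by simp
next
  case (Suc i)
  obtain v where v: "v \<subseteq> w" "card v = Suc i"
    using obtain_subset_with_card_n[of "Suc i" w] Suc.prems by (metis less_imp_le)
  then have "v \<in> Fk k"
    using Suc.prems(1) unfolding Fk_def by auto
  then have "v \<in> V (Suc i)" and "\<not> forces (Fk k) (\<lambda>w v. v \<subseteq> w) V v (bd i)"
    using V[of "Suc i"] Suc.IH v by auto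
  moreover have "w \<notin> V (Suc i)"
    using V[of "Suc i"] Suc.prems by auto
  ultimately show ?case
    using v \<open>v \<in> Fk k\<close> by auto
qed

lemma valuation_card_bounded:
  "valuation (Fk k) (\<lambda>w v. v \<subseteq> w) (\<lambda>j. {v \<in> Fk k. card v \<le> f j})"
  unfolding valuation_def
proof (intro allI conjI ballI impI)
  fix j w v
  assume w: "w \<in> {v \<in> Fk k. card v \<le> f j}" and "v \<in> Fk k" "v \<subseteq> w"
  then have "card v \<le> card w"
    using Fk_finite_nonempty[of k] by (simp add: card_mono)
  then show "v \<in> {v \<in> Fk k. card v \<le> f j}"
    using \<open>v \<in> Fk k\<close> w by simp
qed auto

lemma poset_conseq_mono_premises:
  "poset_conseq W le \<Gamma> \<phi> \<Longrightarrow> \<Gamma> \<subseteq> \<Delta> \<Longrightarrow> poset_conseq W le \<Delta> \<phi>"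
  unfolding poset_conseq_def by blast

lemma finite_bd_premises_bounded:
  assumes "finite \<Gamma>" "\<Gamma> \<subseteq> {Imp (bd i) (Var 0) | i. i \<ge> 1}"
  obtains n where "\<Gamma> \<subseteq> {Imp (bd i) (Var 0) | i. 1 \<le> i \<and> i \<le> n}"
proof -
  have "\<Gamma> \<subseteq> (\<lambda>i. Imp (bd i) (Var 0)) ` {i. i \<ge> 1}"
    using assms(2) by (auto simp: image_iff)
  then obtain I where I: "finite I" "I \<subseteq> {i. i \<ge> 1}" "\<Gamma> = (\<lambda>i. Imp (bd i) (Var 0)) ` I"
    using finite_subset_image[OF assms(1)] by metis
  have "\<Gamma> \<subseteq> {Imp (bd i) (Var 0) | i. 1 \<le> i \<and> i \<le> Max I}"
  proof
    fix \<gamma>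
    assume "\<gamma> \<in> \<Gamma>"
    then obtain i where "i \<in> I" "\<gamma> = Imp (bd i) (Var 0)"
      using I(3) by blast
    then show "\<gamma> \<in> {Imp (bd i) (Var 0) | i. 1 \<le> i \<and> i \<le> Max I}"
      using I(1,2) by auto
  qed
  then show thesis by (rule that)
qed

lemma medvedev_conseq_bd_premises:
  "medvedev_conseq {Imp (bd i) (Var 0) | i. i \<ge> 1} (Var 0)"
  unfolding medvedev_conseq_def poset_conseq_def
proof (intro allI impI ballI)
  fix k :: nat and V w
  assume "1 \<le> k" and w: "w \<in> Fk k"
    and bd_imp: "\<forall>\<gamma>\<in>{Imp (bd i) (Var 0) | i. 1 \<le> i}. forces (Fk k) (\<lambda>w v. v \<subseteq> w) V w \<gamma>"
  then have "forces (Fk k) (\<lambda>w v. v \<subseteq> w) V w (Imp (bd k) (Var 0))"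
    by blast
  moreover have "forces (Fk k) (\<lambda>w v. v \<subseteq> w) V w (bd k)"
    using forces_bd_if_card_le[OF Fk_finite_nonempty w card_le_of_Fk[OF w]] .
  ultimately show "forces (Fk k) (\<lambda>w v. v \<subseteq> w) V w (Var 0)"
    using w by auto
qed

lemma not_poset_conseq_bounded_bd_premises:
  "\<not> poset_conseq (Fk (Suc n)) (\<lambda>w v. v \<subseteq> w) {Imp (bd i) (Var 0) | i. 1 \<le> i \<and> i \<le> n} (Var 0)"
proof
  define V where "V = (\<lambda>j. {v \<in> Fk (Suc n). card v \<le> (if j = 0 then n else j)})"
  have val: "valuation (Fk (Suc n)) (\<lambda>w v. v \<subseteq> w) V"
    unfolding V_def by (rule valuation_card_bounded)
  have V_pos: "\<And>j. 1 \<le> j \<Longrightarrow> V j = {v \<in> Fk (Suc n). card v \<le> j}"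
    by (simp add: V_def)
  have top: "{..n} \<in> Fk (Suc n)"
    unfolding Fk_def by auto
  have "forces (Fk (Suc n)) (\<lambda>w v. v \<subseteq> w) V {..n} (Imp (bd i) (Var 0))"
    if "i \<le> n" for i
  proof -
    have "v \<in> V 0" if "v \<in> Fk (Suc n)" "forces (Fk (Suc n)) (\<lambda>w v. v \<subseteq> w) V v (bd i)" for v
    proof -
      have "\<not> i < card v"
        using not_forces_bd_if_card_gt[OF V_pos] that by blast
      then show ?thesis
        using that(1) \<open>i \<le> n\<close> by (simp add: V_def)
    qed
    then show ?thesis by simp
  qed
  then have bd_imp: "\<forall>\<gamma>\<in>{Imp (bd i) (Var 0) | i. 1 \<le> i \<and> i \<le> n}.
      forces (Fk (Suc n)) (\<lambda>w v. v \<subseteq> w) V {..n} \<gamma>"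
    by blast
  assume "poset_conseq (Fk (Suc n)) (\<lambda>w v. v \<subseteq> w)
    {Imp (bd i) (Var 0) | i. 1 \<le> i \<and> i \<le> n} (Var 0)"
  then have "forces (Fk (Suc n)) (\<lambda>w v. v \<subseteq> w) V {..n} (Var 0)"
    using val top bd_imp unfolding poset_conseq_def by blast
  then show False
    by (simp add: V_def)
qed

lemma not_medvedev_conseq_finite_bd_premises:
  assumes "finite \<Gamma>" "\<Gamma> \<subseteq> {Imp (bd i) (Var 0) | i. i \<ge> 1}"
  shows "\<not> medvedev_conseq \<Gamma> (Var 0)"
proof
  obtain n where bounded: "\<Gamma> \<subseteq> {Imp (bd i) (Var 0) | i. 1 \<le> i \<and> i \<le> n}"
    using finite_bd_premises_bounded[OF assms] .
  assume "medvedev_conseq \<Gamma> (Var 0)"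
  then have "poset_conseq (Fk (Suc n)) (\<lambda>w v. v \<subseteq> w) \<Gamma> (Var 0)"
    unfolding medvedev_conseq_def by simp
  then have "poset_conseq (Fk (Suc n)) (\<lambda>w v. v \<subseteq> w)
      {Imp (bd i) (Var 0) | i. 1 \<le> i \<and> i \<le> n} (Var 0)"
    using bounded by (rule poset_conseq_mono_premises)
  then show False
    using not_poset_conseq_bounded_bd_premises by contradiction
qed

theorem mainTheorem11:
  shows "medvedev_conseq {Imp (bd i) (Var 0) | i. i \<ge> 1} (Var 0)
    \<and> (\<forall>\<Gamma>'. finite \<Gamma>' \<and> \<Gamma>' \<subseteq> {Imp (bd i) (Var 0) | i. i \<ge> 1} \<longrightarrow> \<not> medvedev_conseq \<Gamma>' (Var 0))
    \<and> \<not> compact_conseq medvedev_conseq"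
proof (intro conjI allI impI)
  show "medvedev_conseq {Imp (bd i) (Var 0) | i. i \<ge> 1} (Var 0)"
    by (rule medvedev_conseq_bd_premises)
  show "\<not> medvedev_conseq \<Gamma>' (Var 0)"
    if "finite \<Gamma>' \<and> \<Gamma>' \<subseteq> {Imp (bd i) (Var 0) | i. i \<ge> 1}" for \<Gamma>'
    using not_medvedev_conseq_finite_bd_premises that by blast
  then show "\<not> compact_conseq medvedev_conseq"
    using medvedev_conseq_bd_premises unfolding compact_conseq_def by blast
qed

end
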